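(* There exist sets $\mathcal X,\mathcal Y$, a metric $\ell$ on $\mathcal Y$, and a class $\mathcal H\subseteq\mathcal Y^{\mathcal X}$ such that $\operatorname{diam}(\mathcal H)<\infty$, $\Phi(\mathcal H)=\infty$, and $\mathbb{D}_{\mathrm{onl}}(\mathcal H)<\infty$.
   Context: For $\ell:\mathcal Y\times\mathcal Y\to\mathbb R_{\ge0}$ and $\mathcal H\subseteq\mathcal Y^{\mathcal X}$: $d_\ell(f,g)=\sup_x\ell(f(x),g(x))$, $\operatorname{diam}(\mathcal H)=\sup_{f,g\in\mathcal H}d_\ell(f,g)$, $N(\mathcal H,\varepsilon)$ is the minimal size of $S\subseteq\mathcal H$ such that every $h\in\mathcal H$ is within $d_\ell$-distance $\le\varepsilon$ of some $s\in S$ ($+\infty$ if none finite), and $\Phi(\mathcal H)=\int_0^{\operatorname{diam}(\mathcal H)}\log_2N(\mathcal H,\varepsilon)d\varepsilon$. Scaled Littlestone tree of depth $D\le\infty$: internal nodes $u\in\{0,1\}^{<D}$ labeled $x_u\in\mathcal X$, edges labeled $s_{u,0},s_{u,1}\in\mathcal Y$, gap $\gamma_u=\ell(s_{u,0},s_{u,1})$; realizable by $\mathcal H$ if for every branch $b$ and finite $n\le D$ some $h\in\mathcal{H}$ has $h(x_{b_{\le t}})=s_{b_{\le t},b_{t+1}}$ for $t<n$ ($b_{\le t}$ the length-$t$ prefix). $\mathbb{D}_{\mathrm{onl}}(\mathcal{H})=\sup_{\mathcal T}\inf_b\sum_t\gamma_{b_{\le t}}$ over realizable trees $\mathcal T$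 and branches $b$. *)

theory Defs
  imports "HOL-Analysis.Analysis"
begin

text \<open>The domain and label sets are taken to be the full types 'x and 'y.\<close>

definition is_metric :: "('y \<Rightarrow> 'y \<Rightarrow> real) \<Rightarrow> bool" where
  "is_metric l \<longleftrightarrow> (\<forall>a b. 0 \<le> l a b) \<and> (\<forall>a b. l a b = 0 \<longleftrightarrow> a = b)
     \<and> (\<forall>a b. l a b = l b a) \<and> (\<forall>a b c. l a c \<le> l a b + l b c)"

definition dist_l :: "('y \<Rightarrow> 'y \<Rightarrow> real) \<Rightarrow> ('x \<Rightarrow> 'y) \<Rightarrow> ('x \<Rightarrow> 'y) \<Rightarrow> ereal" where
  "dist_l l f g = (SUP x. ereal (l (f x) (g x)))"

definition diam_l :: "('y \<Rightarrow> 'y \<Rightarrow> real) \<Rightarrow> ('x \<Rightarrow> 'y) set \<Rightarrow> ereal" where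
  "diam_l l H = (SUP f\<in>H. SUP g\<in>H. dist_l l f g)"

definition cover_num :: "('y \<Rightarrow> 'y \<Rightarrow> real) \<Rightarrow> ('x \<Rightarrow> 'y) set \<Rightarrow> real \<Rightarrow> enat" where
  "cover_num l H eps = (INF S \<in> {S. S \<subseteq> H \<and> finite S \<and> (\<forall>h\<in>H. \<exists>s\<in>S. dist_l l h s \<le> ereal eps)}.
      enat (card S))"

definition log2_enat :: "enat \<Rightarrow> ennreal" where
  "log2_enat n = (case n of enat k \<Rightarrow> ennreal (log 2 (real k)) | \<infinity> \<Rightarrow> \<infinity>)"

definition Phi :: "('y \<Rightarrow> 'y \<Rightarrow> real) \<Rightarrow> ('x \<Rightarrow> 'y) set \<Rightarrow> ennreal" where
  "Phi l H = (\<integral>\<^sup>+ eps. indicator {e::real. 0 < e \<and> ereal e < diam_l l H} eps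
                  * log2_enat (cover_num l H eps) \<partial>lborel)"

text \<open>Scaled Littlestone trees: node labels xl :: bool list \<Rightarrow> 'x, edge labels
  sl u b (b = False for edge 0, True for edge 1), depth D (possibly infinite).
  Only nodes u with length u < D matter. Branches are infinite bit sequences; for
  finite D only the first D bits matter.\<close>

definition prefix_of :: "(nat \<Rightarrow> bool) \<Rightarrow> nat \<Rightarrow> bool list" where
  "prefix_of b t = map b [0..<t]"

definition realizable_tree ::
  "('x \<Rightarrow> 'y) set \<Rightarrow> (bool list \<Rightarrow> 'x) \<Rightarrow> (bool list \<Rightarrow> bool \<Rightarrow> 'y) \<Rightarrow> enat \<Rightarrow> bool" where
  "realizable_tree H xl sl D \<longleftrightarrow>
     (\<forall>b::nat \<Rightarrow> bool. \<forall>n::nat. enat n \<le> D \<longrightarrow>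
        (\<exists>h\<in>H. \<forall>t<n. h (xl (prefix_of b t)) = sl (prefix_of b t) (b t)))"

definition branch_loss ::
  "('y \<Rightarrow> 'y \<Rightarrow> real) \<Rightarrow> (bool list \<Rightarrow> bool \<Rightarrow> 'y) \<Rightarrow> enat \<Rightarrow> (nat \<Rightarrow> bool) \<Rightarrow> ennreal" where
  "branch_loss l sl D b = (\<Sum>t. if enat t < D
       then ennreal (l (sl (prefix_of b t) False) (sl (prefix_of b t) True)) else 0)"

definition D_onl :: "('y \<Rightarrow> 'y \<Rightarrow> real) \<Rightarrow> ('x \<Rightarrow> 'y) set \<Rightarrow> ennreal" where
  "D_onl l H = (SUP T \<in> {(xl, sl, D). realizable_tree H xl sl D}.
      (case T of (xl, sl, D) \<Rightarrow> INF b. branch_loss l sl D b))"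

end

theory Submission
  imports Defs
begin

text \<open>Take the discrete metric on the reals and the class of indicator functions of single
  points of an infinite domain. Distinct members are at distance 1, so at every scale below the
  diameter 1 no finite subfamily covers the class and the entropy integral diverges. In a realizable
  Littlestone tree, let the adversary always follow the edge labelled 1. At a node with nonzero gap
  the two edge labels are 0 and 1, so the branch takes the edge labelled 1; this pins down the only
  point indicator consistent with the branch from then on, so no later node has a nonzero gap and
  the branch loses at most 1.\<close>

definition discrete_metric :: "'a \<Rightarrow> 'a \<Rightarrow> real" where
  "discrete_metric a b = (if a = b then 0 else 1)"

definition point_indicators :: "('x \<Rightarrow> real) set" where
  "point_indicators = range (\<lambda>i. indicator {i})"

lemma is_metric_discrete_metric: "is_metric discrete_metric"
  unfolding is_metric_def discrete_metric_def by auto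

lemma dist_l_ge: "ereal (l (f x) (g x)) \<le> dist_l l f g"
  unfolding dist_l_def by (rule SUP_upper) simp

lemma dist_l_le:
  assumes "\<And>a b. l a b \<le> c"
  shows "dist_l l f g \<le> ereal c"
  unfolding dist_l_def using assms by (intro SUP_least) simp

lemma dist_l_le_diam_l:
  assumes "f \<in> H" "g \<in> H"
  shows "dist_l l f g \<le> diam_l l H"
  unfolding diam_l_def by (rule SUP_upper2[OF assms(1)], rule SUP_upper[OF assms(2)])

lemma diam_l_le:
  assumes "\<And>a b. l a b \<le> c"
  shows "diam_l l H \<le> ereal c"
  unfolding diam_l_def using assms by (intro SUP_least dist_l_le)

lemma dist_l_discrete_metric:
  assumes "f \<noteq> g"
  shows "dist_l discrete_metric f g = 1"
proof (rule antisym)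
  have "dist_l discrete_metric f g \<le> ereal 1"
    by (rule dist_l_le) (simp add: discrete_metric_def)
  then show "dist_l discrete_metric f g \<le> 1" by (simp add: one_ereal_def)
  obtain x where "f x \<noteq> g x" using assms by auto
  then show "1 \<le> dist_l discrete_metric f g"
    using dist_l_ge[of discrete_metric f x g] by (simp add: discrete_metric_def one_ereal_def)
qed

text \<open>An eps-cover of an eps-separated class must contain the whole class.\<close>

lemma cover_num_separated:
  assumes "infinite H" and separated: "\<And>f g. f \<in> H \<Longrightarrow> g \<in> H \<Longrightarrow> f \<noteq> g \<Longrightarrow> ereal eps < dist_l l f g"
  shows "cover_num l H eps = \<infinity>"
proof -
  have "\<not> (S \<subseteq> H \<and> finite S \<and> (\<forall>h\<in>H. \<exists>s\<in>S. dist_l l h s \<le> ereal eps))" for S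
  proof
    assume S: "S \<subseteq> H \<and> finite S \<and> (\<forall>h\<in>H. \<exists>s\<in>S. dist_l l h s \<le> ereal eps)"
    have "H \<subseteq> S"
    proof
      fix h assume "h \<in> H"
      with S obtain s where "s \<in> S" "dist_l l h s \<le> ereal eps" by blast
      with S \<open>h \<in> H\<close> separated[of h s] show "h \<in> S" by force
    qed
    with S \<open>infinite H\<close> show False using finite_subset by blast
  qed
  then have no_covers: "{S. S \<subseteq> H \<and> finite S \<and> (\<forall>h\<in>H. \<exists>s\<in>S. dist_l l h s \<le> ereal eps)} = {}"
    by blast
  show ?thesis
    unfolding cover_num_def no_covers by (simp add: top_enat_def)
qed

lemma Phi_eq_top:
  assumes "0 < r" "ereal r \<le> diam_l l H"
    and cover: "\<And>eps. 0 < eps \<Longrightarrow> eps < r \<Longrightarrow> cover_num l H eps = \<infinity>"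
  shows "Phi l H = \<infinity>"
proof -
  have "(\<integral>\<^sup>+ e. \<infinity> * indicator {0<..<r} e \<partial>lborel) \<le> Phi l H"
    unfolding Phi_def
  proof (rule nn_integral_mono)
    fix e :: real
    show "\<infinity> * indicator {0<..<r} e
      \<le> indicator {e. 0 < e \<and> ereal e < diam_l l H} e * log2_enat (cover_num l H e)"
      using order.strict_trans2[OF _ assms(2), of "ereal e"] cover[of e]
      by (cases "0 < e \<and> e < r") (auto simp: indicator_def log2_enat_def)
  qed
  moreover have "(\<integral>\<^sup>+ e. \<infinity> * indicator {0<..<r} e \<partial>lborel) = \<infinity>"
    using \<open>0 < r\<close> by (simp add: nn_integral_cmult_indicator ennreal_mult_top)
  ultimately show ?thesis by (simp add: top_unique)
qed

lemma D_onl_le: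
  assumes "\<And>xl sl D. realizable_tree H xl sl D \<Longrightarrow> \<exists>b. branch_loss l sl D b \<le> c"
  shows "D_onl l H \<le> c"
  unfolding D_onl_def
proof (rule SUP_least, clarify)
  fix xl sl D assume "realizable_tree H xl sl D"
  with assms obtain b where "branch_loss l sl D b \<le> c" by blast
  then show "(INF b. branch_loss l sl D b) \<le> c" by (meson INF_lower2 UNIV_I)
qed

lemma exists_branch_following: "\<exists>b. \<forall>t. b t = P (prefix_of b t)"
proof -
  define path where "path = rec_nat [] (\<lambda>_ u. u @ [P u])"
  have prefix_path: "prefix_of (\<lambda>t. P (path t)) t = path t" for t
    by (induction t) (simp_all add: prefix_of_def path_def)
  show ?thesis
    by (rule exI[of _ "\<lambda>t. P (path t)"]) (simp add: prefix_path)
qed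

lemma prefix_of_fun_upd: "s \<le> t \<Longrightarrow> prefix_of (b(t := c)) s = prefix_of b s"
  unfolding prefix_of_def by auto

lemma realizable_tree_node:
  assumes "realizable_tree H xl sl D" "enat (Suc t) \<le> D"
  obtains h where "h \<in> H" "\<And>s. s < t \<Longrightarrow> h (xl (prefix_of b s)) = sl (prefix_of b s) (b s)"
    "h (xl (prefix_of b t)) = sl (prefix_of b t) c"
proof -
  from assms obtain h where "h \<in> H"
    and h: "\<And>s. s < Suc t \<Longrightarrow> h (xl (prefix_of (b(t := c)) s)) = sl (prefix_of (b(t := c)) s) ((b(t := c)) s)"
    unfolding realizable_tree_def by blast
  show thesis
  proof (rule that[OF \<open>h \<in> H\<close>])
    show "h (xl (prefix_of b s)) = sl (prefix_of b s) (b s)" if "s < t" for s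
      using h[of s] that prefix_of_fun_upd[of s t b c] by simp
    show "h (xl (prefix_of b t)) = sl (prefix_of b t) c"
      using h[of t] prefix_of_fun_upd[of t t b c] by simp
  qed
qed

lemma point_indicators_values: "h \<in> point_indicators \<Longrightarrow> h x = 0 \<or> h x = 1"
  unfolding point_indicators_def by (auto simp: indicator_def)

lemma point_indicators_eq_one: "h \<in> point_indicators \<Longrightarrow> h x = 1 \<Longrightarrow> h = indicator {x}"
  unfolding point_indicators_def by (auto simp: indicator_def split: if_splits)

lemma suminf_le_single_support:
  fixes f :: "nat \<Rightarrow> ennreal"
  assumes "\<And>t. f t \<le> c" and single: "\<And>s t. f s \<noteq> 0 \<Longrightarrow> f t \<noteq> 0 \<Longrightarrow> s = t"
  shows "suminf f \<le> c"
proof (cases "\<exists>t. f t \<noteq> 0")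
  case True
  then obtain t0 where "f t0 \<noteq> 0" by blast
  with single have "suminf f = sum f {t0}"
    by (intro suminf_finite) auto
  with assms(1) show ?thesis by simp
next
  case False
  then have "f = (\<lambda>_. 0)" by auto
  then show ?thesis by simp
qed

lemma point_indicators_branch_loss:
  assumes tree: "realizable_tree point_indicators xl sl D"
  shows "\<exists>b. branch_loss discrete_metric sl D b \<le> 1"
proof -
  obtain b where b: "\<And>t. b t = (sl (prefix_of b t) True = 1)"
    using exists_branch_following[of "\<lambda>u. sl u True = 1"] by blast
  define has_gap where
    "has_gap t \<longleftrightarrow> enat (Suc t) \<le> D \<and> sl (prefix_of b t) False \<noteq> sl (prefix_of b t) True" for t
  have gap_edge_one: "sl (prefix_of b t) (b t) = 1" if "has_gap t" for t
  proof -
    have depth: "enat (Suc t) \<le> D" using that by (simp add: has_gap_def)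
    obtain h0 where "h0 \<in> point_indicators" "h0 (xl (prefix_of b t)) = sl (prefix_of b t) False"
      using realizable_tree_node[OF tree depth, of b False] by blast
    moreover obtain h1 where "h1 \<in> point_indicators" "h1 (xl (prefix_of b t)) = sl (prefix_of b t) True"
      using realizable_tree_node[OF tree depth, of b True] by blast
    ultimately show ?thesis
      using point_indicators_values[of h0 "xl (prefix_of b t)"] point_indicators_values[of h1 "xl (prefix_of b t)"]
        that b[of t] by (cases "b t") (auto simp: has_gap_def)
  qed
  have no_gap_after_gap: False if "has_gap s" "has_gap t" "s < t" for s t
  proof -
    have depth: "enat (Suc t) \<le> D" using that by (simp add: has_gap_def)
    have determined: "h = indicator {xl (prefix_of b s)}"
      if "h \<in> point_indicators" "\<And>r. r < t \<Longrightarrow> h (xl (prefix_of b r)) = sl (prefix_of b r) (b r)" for h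
      using that \<open>s < t\<close> gap_edge_one[OF \<open>has_gap s\<close>] by (simp add: point_indicators_eq_one)
    obtain h0 where "h0 (xl (prefix_of b t)) = sl (prefix_of b t) False" "h0 = indicator {xl (prefix_of b s)}"
      using realizable_tree_node[OF tree depth, of b False] determined by blast
    moreover obtain h1 where "h1 (xl (prefix_of b t)) = sl (prefix_of b t) True" "h1 = indicator {xl (prefix_of b s)}"
      using realizable_tree_node[OF tree depth, of b True] determined by blast
    ultimately show False using \<open>has_gap t\<close> by (simp add: has_gap_def)
  qed
  define loss where
    "loss = (\<lambda>t. if enat t < D then ennreal (discrete_metric (sl (prefix_of b t) False) (sl (prefix_of b t) True)) else 0)"
  have "suminf loss \<le> 1"
  proof (rule suminf_le_single_support)
    fix s t
    assume "loss s \<noteq> 0" "loss t \<noteq> 0"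
    then have "has_gap s" "has_gap t"
      unfolding loss_def has_gap_def discrete_metric_def by (auto simp: Suc_ile_eq split: if_splits)
    then show "s = t" using no_gap_after_gap by (meson linorder_neqE_nat)
  qed (simp add: loss_def discrete_metric_def)
  then show ?thesis unfolding branch_loss_def loss_def by blast
qed

lemma inj_indicator_singleton: "inj (\<lambda>i. indicator {i} :: 'x \<Rightarrow> 'a::zero_neq_one)"
proof (rule injI)
  fix i j :: 'x
  assume "(indicator {i} :: 'x \<Rightarrow> 'a) = indicator {j}"
  then have "(indicator {j} i :: 'a) = 1" by (metis indicator_simps(1) singletonI)
  then show "i = j" by (simp add: indicator_eq_1_iff)
qed

lemma diam_l_point_indicators:
  assumes "(a::'x) \<noteq> b"
  shows "diam_l discrete_metric (point_indicators :: ('x \<Rightarrow> real) set) = 1"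
proof (rule antisym)
  have "diam_l discrete_metric (point_indicators :: ('x \<Rightarrow> real) set) \<le> ereal 1"
    by (rule diam_l_le) (simp add: discrete_metric_def)
  then show "diam_l discrete_metric (point_indicators :: ('x \<Rightarrow> real) set) \<le> 1"
    by (simp add: one_ereal_def)
  have "indicator {a} \<noteq> (indicator {b} :: 'x \<Rightarrow> real)"
    using assms inj_indicator_singleton by (metis injD)
  then show "1 \<le> diam_l discrete_metric (point_indicators :: ('x \<Rightarrow> real) set)"
    using dist_l_le_diam_l[of "indicator {a}" point_indicators "indicator {b}" discrete_metric]
    by (simp add: point_indicators_def dist_l_discrete_metric)
qed

lemma Phi_point_indicators:
  assumes "infinite (UNIV :: 'x set)"
  shows "Phi discrete_metric (point_indicators :: ('x \<Rightarrow> real) set) = \<infinity>"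
proof (rule Phi_eq_top)
  obtain A :: "'x set" where "card A = 2"
    using infinite_arbitrarily_large[OF assms] by blast
  then obtain a b :: 'x where "a \<noteq> b"
    by (auto simp: card_2_iff)
  then show "ereal 1 \<le> diam_l discrete_metric (point_indicators :: ('x \<Rightarrow> real) set)"
    by (simp add: diam_l_point_indicators)
  have "infinite (point_indicators :: ('x \<Rightarrow> real) set)"
    using assms inj_indicator_singleton unfolding point_indicators_def by (metis finite_imageD)
  then show "cover_num discrete_metric (point_indicators :: ('x \<Rightarrow> real) set) eps = \<infinity>"
    if "eps < 1" for eps
    using that by (intro cover_num_separated) (simp_all add: dist_l_discrete_metric)
qed simp

theorem proposition1p9:
  shows "\<exists>(l :: real \<Rightarrow> real \<Rightarrow> real) (H :: (nat \<Rightarrow> real) set).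
           is_metric l \<and> diam_l l H < \<infinity> \<and> Phi l H = \<infinity> \<and> D_onl l H < \<infinity>"
proof (intro exI conjI)
  show "is_metric discrete_metric" by (rule is_metric_discrete_metric)
  show "diam_l discrete_metric (point_indicators :: (nat \<Rightarrow> real) set) < \<infinity>"
    using diam_l_point_indicators[of 0 "1::nat"] by simp
  show "Phi discrete_metric (point_indicators :: (nat \<Rightarrow> real) set) = \<infinity>"
    by (rule Phi_point_indicators) simp
  have "D_onl discrete_metric (point_indicators :: (nat \<Rightarrow> real) set) \<le> 1"
    by (intro D_onl_le point_indicators_branch_loss)
  then show "D_onl discrete_metric (point_indicators :: (nat \<Rightarrow> real) set) < \<infinity>"
    using le_less_trans[OF _ ennreal_one_less_top] by simp
qed

end
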